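(* For every $n\ge2$, $$E\big[U^{(n)}(U^{(n)}-\tau^{(n)})\big]=\frac{2n}{n-1}\Big(H_{n,1}+H_{n,2}-1-\frac{H_{n,1}^2}{n}\Big).$$
   Context: Fix $n\ge 2$. A Yule tree with speciation rate 1 on $n$ tips: start with a single lineage; each lineage independently splits into two at rate 1; the process is stopped just before the $n$-th speciation event, so the tree has $n$ tips and $n-1$ speciation (internal) nodes, numbered $1,\dots,n-1$ chronologically from the root. For $i=1,\dots,n$ let $T_i$ be the length of the time interval during which there are exactly $i$ lineages; the $T_i$ are independent, $T_i\sim\mathrm{Exp}(i)$ (rate $i$), the $k$-th speciation occurs at time $T_1+\dots+T_k$, and at each speciation the splitting lineage is uniformly chosen among current lineages, independently of the $T_i$. The tree height is $U^{(n)}=T_1+\dots+T_n$. Choose an unordered pair of distinct tips uniformly at random and let $\kappa_n\in\{1,\dots,n-1\}$ be the index of the speciation event at which their lineages split; the coalescent time of the pair is $\tau^{(n)}=T_{\kappa_n+1}+\dots+T_n$. $H_{n,r}=\sum_{i=1}^n i^{-r}$. *)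

theory Defs
  imports "HOL-Probability.Probability"
begin

definition Hgen :: "nat \<Rightarrow> nat \<Rightarrow> real" where
  "Hgen n r = (\<Sum>i=1..n. 1 / (real i) ^ r)"

text \<open>Topology of the Yule tree on n tips.  Lineages are labelled 0,1,2,...
  Before the j-th speciation event (j = 1..n-1) there are j lineages 0..j-1;
  the lineage cs!(j-1) (a number < j) splits, keeping its label and
  producing the new lineage j.  A topology is the list cs of these choices;
  the splitting lineage is uniform and independent at each event, so cs is
  uniform over all valid choice lists.\<close>
definition yule_choices :: "nat \<Rightarrow> nat list set" where
  "yule_choices n = {cs. length cs = n - 1 \<and> (\<forall>j < n - 1. cs ! j \<le> j)}"

definition yule_topology :: "nat \<Rightarrow> nat list pmf" where
  "yule_topology n = pmf_of_set (yule_choices n)"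

text \<open>split_event cs m a b: index of the speciation event at which lineages
  a and b (distinct, both present after m events, i.e. a, b \<le> m) split,
  obtained by tracing both lineages back in time.\<close>
fun split_event :: "nat list \<Rightarrow> nat \<Rightarrow> nat \<Rightarrow> nat \<Rightarrow> nat" where
  "split_event cs 0 a b = 0"
| "split_event cs (Suc m) a b =
     (let c = cs ! m;
          a' = (if a = Suc m then c else a);
          b' = (if b = Suc m then c else b)
      in if a' = b' then Suc m else split_event cs m a' b')"

definition tip_pairs :: "nat \<Rightarrow> (nat \<times> nat) set" where
  "tip_pairs n = {(a, b). a < b \<and> b < n}"

text \<open>Full probability space: (topology, pair) together with the independent
  interval lengths T_i ~ Exp(i), i = 1..n, independent of the topology.\<close>
definition yule_space :: "nat \<Rightarrow> ((nat list \<times> (nat \<times> nat)) \<times> (nat \<Rightarrow> real)) measure" where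
  "yule_space n =
     measure_pmf (pair_pmf (yule_topology n) (pmf_of_set (tip_pairs n)))
     \<Otimes>\<^sub>M (\<Pi>\<^sub>M i\<in>{1..n}. density lborel (exponential_density (real i)))"

definition kappa :: "nat \<Rightarrow> nat list \<times> (nat \<times> nat) \<Rightarrow> nat" where
  "kappa n \<omega> = split_event (fst \<omega>) (n - 1) (fst (snd \<omega>)) (snd (snd \<omega>))"

definition tree_height :: "nat \<Rightarrow> (nat \<Rightarrow> real) \<Rightarrow> real" where
  "tree_height n T = (\<Sum>i=1..n. T i)"

definition coal_time :: "nat \<Rightarrow> (nat list \<times> (nat \<times> nat)) \<times> (nat \<Rightarrow> real) \<Rightarrow> real" where
  "coal_time n x = (\<Sum>i\<in>{kappa n (fst x) + 1..n}. snd x i)"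

end

theory Submission
  imports Defs
begin

(* Writing U - tau = T_1 + ... + T_kappa, the product U (U - tau) is the double sum of
   T_i T_j over i <= n and j <= kappa.  The topology is independent of the interval lengths,
   so the expectation is the sum of P(kappa >= j) E[T_i T_j], with E[T_i T_j] = (1 + [i = j])/(i j).
   The tail P(kappa >= j) = 2 (n - j)/((n - 1)(j + 1)) comes from counting: summed over all m!
   topologies with m speciation events, the number of ordered pairs of lineages that split at
   event j or later is multiplied by m + 3, plus 2 (m + 1)! new pairs, when an event is added,
   because the new lineage behaves like a copy of its parent.  This recurrence solves to
   2 (m + 1)! (m + 1 - j)/(j + 1).  Partial fractions reduce the remaining sums to H_{n,1}, H_{n,2}. *)

lemma sum_if_eq_point:
  assumes "finite A" "c \<in> A" "f c = 0"
  shows "(\<Sum>a\<in>A. if a = c then x else f a) = x + sum f A"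
proof -
  have "(\<Sum>a\<in>A. if a = c then x else f a) = (\<Sum>a\<in>A. (if a = c then x else 0) + f a)"
    using assms(3) by (intro sum.cong) auto
  then show ?thesis
    using assms(1,2) by (simp add: sum.distrib)
qed

lemma integral_sum_sum:
  fixes g :: "'i \<Rightarrow> 'j \<Rightarrow> 'a \<Rightarrow> real"
  assumes "\<And>i j. i \<in> I \<Longrightarrow> j \<in> J \<Longrightarrow> integrable M (g i j)"
  shows "(\<integral>x. (\<Sum>i\<in>I. \<Sum>j\<in>J. g i j x) \<partial>M) = (\<Sum>i\<in>I. \<Sum>j\<in>J. integral\<^sup>L M (g i j))"
  using assms by (simp add: Bochner_Integration.integral_sum Bochner_Integration.integrable_sum)

lemma sum_times_head_sum:
  fixes T :: "nat \<Rightarrow> real"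
  shows "(\<Sum>i=1..n. T i) * ((\<Sum>i=1..n. T i) - (\<Sum>i\<in>{k+1..n}. T i))
       = (\<Sum>i=1..n. \<Sum>j=1..n. of_bool (j \<le> k) * (T i * T j))"
proof -
  have "(\<Sum>i=1..n. T i) = (\<Sum>j=1..n. of_bool (j \<le> k) * T j + of_bool (\<not> j \<le> k) * T j)"
    by (intro sum.cong) auto
  also have "\<dots> = (\<Sum>j=1..n. of_bool (j \<le> k) * T j) + (\<Sum>i\<in>{k+1..n}. T i)"
  proof -
    have "{1..n} \<inter> {j. \<not> j \<le> k} = {k+1..n}" by auto
    then show ?thesis by (simp only: sum.distrib sum_of_bool_mult_eq finite_atLeastAtMost)
  qed
  finally have "(\<Sum>i=1..n. T i) - (\<Sum>i\<in>{k+1..n}. T i) = (\<Sum>j=1..n. of_bool (j \<le> k) * T j)"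
    by simp
  then show ?thesis
    by (simp only: sum_product mult.left_commute)
qed

lemma pair_pmf_of_set:
  assumes "finite A" "A \<noteq> {}" "finite B" "B \<noteq> {}"
  shows "pair_pmf (pmf_of_set A) (pmf_of_set B) = pmf_of_set (A \<times> B)"
proof (rule pmf_eqI)
  fix x :: "'a \<times> 'b"
  show "pmf (pair_pmf (pmf_of_set A) (pmf_of_set B)) x = pmf (pmf_of_set (A \<times> B)) x"
    using assms by (cases x) (simp add: pmf_pair card_cartesian_product split: split_indicator)
qed

lemma integral_fst_times_snd:
  fixes f :: "'a \<Rightarrow> real" and g :: "'b \<Rightarrow> real"
  assumes "sigma_finite_measure M" "sigma_finite_measure N"
    and f: "integrable M f" and g: "integrable N g"
  shows "integrable (M \<Otimes>\<^sub>M N) (\<lambda>x. f (fst x) * g (snd x))"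
    and "(\<integral>x. f (fst x) * g (snd x) \<partial>(M \<Otimes>\<^sub>M N)) = integral\<^sup>L M f * integral\<^sup>L N g"
proof -
  interpret pair_sigma_finite M N using assms(1,2) by (rule pair_sigma_finite.intro)
  have [measurable]: "f \<in> borel_measurable M" "g \<in> borel_measurable N"
    using f g by (auto intro: borel_measurable_integrable)
  show int: "integrable (M \<Otimes>\<^sub>M N) (\<lambda>x. f (fst x) * g (snd x))"
  proof (rule Fubini_integrable)
    show "integrable M (\<lambda>x. \<integral>y. norm (f (fst (x, y)) * g (snd (x, y))) \<partial>N)"
      using f by (simp add: abs_mult)
    show "AE x in M. integrable N (\<lambda>y. f (fst (x, y)) * g (snd (x, y)))"
      using g by simp
  qed measurable
  show "(\<integral>x. f (fst x) * g (snd x) \<partial>(M \<Otimes>\<^sub>M N)) = integral\<^sup>L M f * integral\<^sup>L N g"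
    using integral_fst'[OF int] by simp
qed

abbreviation exponential_measure :: "real \<Rightarrow> real measure" where
  "exponential_measure l \<equiv> density lborel (exponential_density l)"

(* Stated for every rate: product_sigma_finite needs all indices, and rates <= 0 give the null measure. *)
lemma sigma_finite_exponential_measure: "sigma_finite_measure (exponential_measure l)"
proof (cases "0 < l")
  case True
  then interpret prob_space "exponential_measure l" by (rule prob_space_exponential_density)
  show ?thesis by unfold_locales
next
  case False
  then have "\<And>x. ennreal (exponential_density l x) = 0"
    by (auto simp: exponential_density_def ennreal_eq_0_iff mult_nonpos_nonneg)
  then have "emeasure (exponential_measure l) (space (exponential_measure l)) = 0"
    by (simp add: emeasure_density)
  then interpret finite_measure "exponential_measure l" by (intro finite_measureI) simp
  show ?thesis by unfold_locales
qed

lemma has_bochner_integral_exponential_moment: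
  assumes "0 < l"
  shows "has_bochner_integral (exponential_measure l) (\<lambda>x. x ^ k) (fact k / l ^ k)"
proof -
  interpret prob_space "exponential_measure l" using assms by (rule prob_space_exponential_density)
  have "distributed (exponential_measure l) lborel (\<lambda>x. x) (exponential_density l)"
    by (auto simp: distributed_def distr_id2)
  from has_bochner_integral_erlang_ith_moment[OF assms this, of k] show ?thesis by simp
qed

lemma has_bochner_integral_exponential_product_moment:
  fixes I :: "'i set" and r :: "'i \<Rightarrow> real"
  assumes "finite I" "\<And>k. k \<in> I \<Longrightarrow> 0 < r k" "i \<in> I" "j \<in> I"
  shows "has_bochner_integral (\<Pi>\<^sub>M k\<in>I. exponential_measure (r k)) (\<lambda>T. T i * T j)
           ((if i = j then 2 else 1) / (r i * r j))"
proof -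
  interpret product_sigma_finite "\<lambda>k. exponential_measure (r k)"
    by (simp add: product_sigma_finite_def sigma_finite_exponential_measure)
  define p where "p k = (of_bool (k = i) + of_bool (k = j) :: nat)" for k
  have moment: "has_bochner_integral (exponential_measure (r k)) (\<lambda>x. x ^ p k) (fact (p k) / r k ^ p k)"
    if "k \<in> I" for k
    using assms(2)[OF that] by (rule has_bochner_integral_exponential_moment)
  have "T k ^ p k = (if k = i then T k else 1) * (if k = j then T k else 1)" for T :: "'i \<Rightarrow> real" and k
    by (simp add: p_def power_add)
  then have prod_eq: "(\<Prod>k\<in>I. T k ^ p k) = T i * T j" for T :: "'i \<Rightarrow> real"
    using assms(1,3,4) by (simp add: prod.distrib)
  have "(\<Prod>k\<in>I. fact (p k) / r k ^ p k) = (\<Prod>k\<in>{i, j}. fact (p k) / r k ^ p k)"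
    using assms(1,3,4) by (intro prod.mono_neutral_right) (auto simp: p_def)
  also have "\<dots> = (if i = j then 2 else 1) / (r i * r j)"
    by (auto simp: p_def power2_eq_square)
  finally have "(\<Prod>k\<in>I. fact (p k) / r k ^ p k) = (if i = j then 2 else 1) / (r i * r j)" .
  with product_integrable_prod[OF assms(1), of "\<lambda>k x. x ^ p k"]
       product_integral_prod[OF assms(1), of "\<lambda>k x. x ^ p k"] moment
  show ?thesis
    by (simp add: has_bochner_integral_iff prod_eq)
qed

definition choice_lists :: "nat \<Rightarrow> nat list set" where
  "choice_lists m = {cs. length cs = m \<and> (\<forall>j<m. cs ! j \<le> j)}"

lemma yule_choices_Suc: "yule_choices (Suc m) = choice_lists m"
  by (simp add: yule_choices_def choice_lists_def)

lemma choice_lists_0: "choice_lists 0 = {[]}"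
  by (auto simp: choice_lists_def)

lemma choice_lists_Suc:
  "choice_lists (Suc m) = (\<lambda>(cs, c). cs @ [c]) ` (choice_lists m \<times> {..m})"
proof (intro set_eqI iffI)
  fix xs assume "xs \<in> choice_lists (Suc m)"
  then have len: "length xs = Suc m" and le: "\<And>j. j < Suc m \<Longrightarrow> xs ! j \<le> j"
    by (auto simp: choice_lists_def)
  obtain cs c where xs: "xs = cs @ [c]"
    using len by (cases xs rule: rev_exhaust) auto
  have "cs ! j \<le> j" if "j < m" for j
    using le[of j] that len by (simp add: xs nth_append)
  then have "cs \<in> choice_lists m"
    using len by (simp add: choice_lists_def xs)
  moreover have "c \<le> m"
    using le[of m] len by (simp add: xs nth_append)
  ultimately show "xs \<in> (\<lambda>(cs, c). cs @ [c]) ` (choice_lists m \<times> {..m})"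
    using xs by force
qed (auto simp: choice_lists_def nth_append less_Suc_eq)

lemma inj_snoc: "inj (\<lambda>(xs, x). xs @ [x])"
  by (auto simp: inj_on_def)

lemma finite_choice_lists: "finite (choice_lists m)"
  by (induction m) (auto simp: choice_lists_0 choice_lists_Suc)

lemma card_choice_lists: "card (choice_lists m) = fact m"
proof (induction m)
  case (Suc m)
  have "card (choice_lists (Suc m)) = card (choice_lists m \<times> {..m})"
    unfolding choice_lists_Suc by (rule card_image[OF inj_on_subset[OF inj_snoc]]) simp
  with Suc show ?case by (simp add: card_cartesian_product)
qed (simp add: choice_lists_0)

lemma split_event_append: "m \<le> length cs \<Longrightarrow> split_event (cs @ ys) m a b = split_event cs m a b"
  by (induction m arbitrary: a b) (auto simp: nth_append Let_def)

lemma split_event_le: "split_event cs m a b \<le> m"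
  by (induction m arbitrary: a b) (auto simp: Let_def le_SucI)

lemma split_event_commute: "split_event cs m a b = split_event cs m b a"
  by (induction m arbitrary: a b) (auto simp: Let_def)

definition late_split_pairs :: "nat \<Rightarrow> nat list \<Rightarrow> nat \<Rightarrow> nat" where
  "late_split_pairs m cs j = (\<Sum>a\<le>m. \<Sum>b\<le>m. of_bool (a \<noteq> b \<and> j \<le> split_event cs m a b))"

definition late_split_total :: "nat \<Rightarrow> nat \<Rightarrow> nat" where
  "late_split_total m j = (\<Sum>cs\<in>choice_lists m. late_split_pairs m cs j)"

(* The new lineage Suc m traces back to c, so the pair (a, Suc m) splits where (a, c) does,
   except for (c, Suc m), which splits at event Suc m. *)
lemma late_split_pairs_snoc:
  assumes "length cs = m" "c \<le> m"
  shows "late_split_pairs (Suc m) (cs @ [c]) j = late_split_pairs m cs j + 2 * of_bool (j \<le> Suc m)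
     + (\<Sum>a\<le>m. of_bool (a \<noteq> c \<and> j \<le> split_event cs m a c))
     + (\<Sum>b\<le>m. of_bool (c \<noteq> b \<and> j \<le> split_event cs m c b))"
proof -
  let ?se = "split_event (cs @ [c]) (Suc m)"
  have old: "(\<Sum>a\<le>m. \<Sum>b\<le>m. of_bool (a \<noteq> b \<and> j \<le> ?se a b)) = late_split_pairs m cs j"
    unfolding late_split_pairs_def using assms(1)
    by (intro sum.cong refl) (auto simp: split_event_append)
  have column: "(\<Sum>a\<le>m. of_bool (a \<noteq> Suc m \<and> j \<le> ?se a (Suc m)))
      = of_bool (j \<le> Suc m) + (\<Sum>a\<le>m. of_bool (a \<noteq> c \<and> j \<le> split_event cs m a c))"
  proof -
    have "(\<Sum>a\<le>m. of_bool (a \<noteq> Suc m \<and> j \<le> ?se a (Suc m)))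
        = (\<Sum>a\<le>m. if a = c then of_bool (j \<le> Suc m) else of_bool (a \<noteq> c \<and> j \<le> split_event cs m a c))"
      using assms(1) by (intro sum.cong refl) (auto simp: split_event_append)
    then show ?thesis using assms(2) by (simp add: sum_if_eq_point)
  qed
  have row: "(\<Sum>b\<le>m. of_bool (Suc m \<noteq> b \<and> j \<le> ?se (Suc m) b))
      = of_bool (j \<le> Suc m) + (\<Sum>b\<le>m. of_bool (c \<noteq> b \<and> j \<le> split_event cs m c b))"
  proof -
    have "(\<Sum>b\<le>m. of_bool (Suc m \<noteq> b \<and> j \<le> ?se (Suc m) b))
        = (\<Sum>b\<le>m. if b = c then of_bool (j \<le> Suc m) else of_bool (c \<noteq> b \<and> j \<le> split_event cs m c b))"
      using assms(1) by (intro sum.cong refl) (auto simp: split_event_append)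
    then show ?thesis using assms(2) by (simp add: sum_if_eq_point)
  qed
  have "late_split_pairs (Suc m) (cs @ [c]) j
      = (\<Sum>a\<le>m. \<Sum>b\<le>m. of_bool (a \<noteq> b \<and> j \<le> ?se a b))
        + (\<Sum>a\<le>m. of_bool (a \<noteq> Suc m \<and> j \<le> ?se a (Suc m)))
        + (\<Sum>b\<le>m. of_bool (Suc m \<noteq> b \<and> j \<le> ?se (Suc m) b))"
    unfolding late_split_pairs_def by (simp only: sum.atMost_Suc sum.distrib) simp
  then show ?thesis
    by (simp only: old column row)
qed

lemma sum_late_split_pairs_snoc:
  assumes "length cs = m"
  shows "(\<Sum>c\<le>m. late_split_pairs (Suc m) (cs @ [c]) j)
       = (m + 3) * late_split_pairs m cs j + 2 * Suc m * of_bool (j \<le> Suc m)"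
proof -
  have swap: "(\<Sum>c\<le>m. \<Sum>a\<le>m. of_bool (a \<noteq> c \<and> j \<le> split_event cs m a c)) = late_split_pairs m cs j"
    unfolding late_split_pairs_def by (rule sum.swap)
  have "(\<Sum>c\<le>m. late_split_pairs (Suc m) (cs @ [c]) j)
      = (\<Sum>c\<le>m. late_split_pairs m cs j + 2 * of_bool (j \<le> Suc m)
           + (\<Sum>a\<le>m. of_bool (a \<noteq> c \<and> j \<le> split_event cs m a c))
           + (\<Sum>b\<le>m. of_bool (c \<noteq> b \<and> j \<le> split_event cs m c b)))"
    using assms by (intro sum.cong refl late_split_pairs_snoc) auto
  also have "\<dots> = Suc m * late_split_pairs m cs j + Suc m * (2 * of_bool (j \<le> Suc m))
        + late_split_pairs m cs j + late_split_pairs m cs j"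
    by (simp only: sum.distrib swap sum_constant card_atMost of_nat_id late_split_pairs_def[symmetric])
  finally show ?thesis by (simp add: algebra_simps)
qed

lemma late_split_total_Suc:
  "late_split_total (Suc m) j = (m + 3) * late_split_total m j + 2 * fact (Suc m) * of_bool (j \<le> Suc m)"
proof -
  have "late_split_total (Suc m) j = (\<Sum>(cs, c)\<in>choice_lists m \<times> {..m}. late_split_pairs (Suc m) (cs @ [c]) j)"
    unfolding late_split_total_def choice_lists_Suc
    by (subst sum.reindex[OF inj_on_subset[OF inj_snoc]]) (simp_all add: case_prod_unfold)
  also have "\<dots> = (\<Sum>cs\<in>choice_lists m. (m + 3) * late_split_pairs m cs j + 2 * Suc m * of_bool (j \<le> Suc m))"
    unfolding sum.cartesian_product[symmetric]
    by (intro sum.cong refl sum_late_split_pairs_snoc) (simp add: choice_lists_def)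
  also have "\<dots> = (m + 3) * late_split_total m j + 2 * fact (Suc m) * of_bool (j \<le> Suc m)"
    by (simp add: late_split_total_def sum.distrib sum_distrib_left card_choice_lists algebra_simps)
  finally show ?thesis .
qed

lemma late_split_total_eq_0: "m < j \<Longrightarrow> late_split_total m j = 0"
proof -
  assume "m < j"
  then have "\<not> j \<le> split_event cs m a b" for cs a b
    using split_event_le[of cs m a b] by linarith
  then show ?thesis by (simp add: late_split_total_def late_split_pairs_def)
qed

lemma late_split_total_closed_form:
  "1 \<le> j \<Longrightarrow> j \<le> Suc m \<Longrightarrow> (j + 1) * late_split_total m j = 2 * fact (Suc m) * (Suc m - j)"
proof (induction m arbitrary: j)
  case 0
  then show ?case by (simp add: late_split_total_def late_split_pairs_def choice_lists_0)
next
  case (Suc m)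
  show ?case
  proof (cases "j = Suc (Suc m)")
    case True
    then show ?thesis by (simp add: late_split_total_eq_0)
  next
    case False
    with Suc.prems have j: "j \<le> Suc m" by simp
    then obtain d where d: "Suc m = j + d" using le_Suc_ex by blast
    have IH: "(j + 1) * late_split_total m j = 2 * fact (Suc m) * d"
      using Suc.IH[OF Suc.prems(1) j] d by simp
    have "(j + 1) * late_split_total (Suc m) j = (m + 3) * ((j + 1) * late_split_total m j) + (j + 1) * (2 * fact (Suc m))"
      using j by (simp add: late_split_total_Suc algebra_simps)
    also have "\<dots> = 2 * fact (Suc m) * ((m + 3) * d + j + 1)"
      unfolding IH by (simp add: algebra_simps)
    also have "(m + 3) * d + j + 1 = Suc (Suc m) * (Suc (Suc m) - j)"
    proof -
      have "Suc (Suc m) - j = Suc d" using d by simp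
      then show ?thesis by (simp add: algebra_simps)
    qed
    finally show ?thesis by (simp only: fact_Suc[of "Suc m"] of_nat_id ac_simps)
  qed
qed

lemma tip_pairs_Suc: "tip_pairs (Suc n) = tip_pairs n \<union> (\<lambda>a. (a, n)) ` {..<n}"
  by (auto simp: tip_pairs_def less_Suc_eq)

lemma finite_tip_pairs: "finite (tip_pairs n)"
  by (rule finite_subset[of _ "{..<n} \<times> {..<n}"]) (auto simp: tip_pairs_def)

lemma card_tip_pairs: "2 * card (tip_pairs n) = n * (n - 1)"
proof (induction n)
  case (Suc n)
  have "tip_pairs n \<inter> (\<lambda>a. (a, n)) ` {..<n} = {}" by (auto simp: tip_pairs_def)
  then have "card (tip_pairs (Suc n)) = card (tip_pairs n) + n"
    unfolding tip_pairs_Suc by (simp add: card_Un_disjoint finite_tip_pairs card_image inj_on_def)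
  with Suc show ?case by (cases n) (simp_all add: algebra_simps)
qed (simp add: tip_pairs_def)

lemma late_split_pairs_eq_card_tip_pairs:
  "late_split_pairs m cs j = 2 * card {p \<in> tip_pairs (Suc m). j \<le> split_event cs m (fst p) (snd p)}"
proof -
  define h where "h a b = (of_bool (a < b \<and> j \<le> split_event cs m a b) :: nat)" for a b
  have "late_split_pairs m cs j = (\<Sum>a\<le>m. \<Sum>b\<le>m. h a b) + (\<Sum>a\<le>m. \<Sum>b\<le>m. h b a)"
    unfolding late_split_pairs_def h_def sum.distrib[symmetric]
    by (intro sum.cong refl) (auto simp: split_event_commute[of cs m])
  also have "(\<Sum>a\<le>m. \<Sum>b\<le>m. h b a) = (\<Sum>a\<le>m. \<Sum>b\<le>m. h a b)"
    by (rule sum.swap)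
  also have "(\<Sum>a\<le>m. \<Sum>b\<le>m. h a b) = (\<Sum>p\<in>{..m} \<times> {..m}. h (fst p) (snd p))"
    by (simp add: sum.cartesian_product case_prod_unfold)
  also have "\<dots> = (\<Sum>p\<in>tip_pairs (Suc m). h (fst p) (snd p))"
    by (rule sum.mono_neutral_right) (auto simp: tip_pairs_def h_def)
  also have "\<dots> = card {p \<in> tip_pairs (Suc m). j \<le> split_event cs m (fst p) (snd p)}"
    using finite_tip_pairs by (simp add: h_def Int_def) (auto simp: tip_pairs_def intro!: arg_cong[where f = card])
  finally show ?thesis by simp
qed

lemma card_late_split_outcomes:
  assumes "1 \<le> j" "j \<le> Suc m"
  shows "(j + 1) * (2 * card ((choice_lists m \<times> tip_pairs (Suc m)) \<inter> {\<omega>. j \<le> kappa (Suc m) \<omega>}))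
           = 2 * fact (Suc m) * (Suc m - j)"
proof -
  have "(choice_lists m \<times> tip_pairs (Suc m)) \<inter> {\<omega>. j \<le> kappa (Suc m) \<omega>}
      = Sigma (choice_lists m) (\<lambda>cs. {p \<in> tip_pairs (Suc m). j \<le> split_event cs m (fst p) (snd p)})"
    by (auto simp: kappa_def)
  then have "2 * card ((choice_lists m \<times> tip_pairs (Suc m)) \<inter> {\<omega>. j \<le> kappa (Suc m) \<omega>})
      = late_split_total m j"
    by (simp add: sum_distrib_left late_split_pairs_eq_card_tip_pairs late_split_total_def
        finite_choice_lists finite_tip_pairs)
  then show ?thesis
    using late_split_total_closed_form[OF assms] by simp
qed

lemma prob_late_split:
  assumes "2 \<le> n" "1 \<le> j" "j \<le> n"
  shows "measure_pmf.prob (pair_pmf (yule_topology n) (pmf_of_set (tip_pairs n))) {\<omega>. j \<le> kappa n \<omega>}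
           = 2 * (real n - real j) / ((real n - 1) * (real j + 1))"
proof -
  obtain m where n: "n = Suc m" using assms(1) by (cases n) auto
  define C where "C = choice_lists m"
  define TP where "TP = tip_pairs n"
  define S where "S = (C \<times> TP) \<inter> {\<omega>. j \<le> kappa n \<omega>}"
  have C: "finite C" "C \<noteq> {}" "card C = fact m"
    using card_choice_lists[of m] finite_choice_lists[of m] by (auto simp: C_def)
  have "(0, 1) \<in> TP" using assms(1) by (simp add: TP_def tip_pairs_def)
  then have TP: "finite TP" "TP \<noteq> {}" using finite_tip_pairs[of n] by (auto simp: TP_def)
  have "real ((j + 1) * (2 * card S)) = real (2 * fact (Suc m) * (Suc m - j))"
    using card_late_split_outcomes[OF assms(2) assms(3)[unfolded n]] by (simp add: S_def C_def TP_def n)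
  then have S_eq: "real (card S) = real n * real (fact m) * (real n - real j) / (real j + 1)"
    using assms(3) by (simp add: n of_nat_diff field_simps)
  have "real (2 * card TP) = real (n * (n - 1))"
    unfolding TP_def card_tip_pairs ..
  then have TP_eq: "real (card TP) = real n * (real n - 1) / 2"
    using assms(1) by (simp add: of_nat_diff)
  have "pair_pmf (yule_topology n) (pmf_of_set TP) = pmf_of_set (C \<times> TP)"
    using C TP by (simp add: yule_topology_def n yule_choices_Suc C_def pair_pmf_of_set)
  then have "measure_pmf.prob (pair_pmf (yule_topology n) (pmf_of_set TP)) {\<omega>. j \<le> kappa n \<omega>}
      = real (card S) / (real (fact m) * real (card TP))"
    using C TP by (simp add: measure_pmf_of_set S_def card_cartesian_product)
  also have "\<dots> = 2 * (real n - real j) / ((real n - 1) * (real j + 1))"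
  proof -
    have cancel: "x * F * d / J / (F * (x * b / 2)) = 2 * d / (b * J)"
      if "x \<noteq> 0" "F \<noteq> 0" "b \<noteq> 0" "J \<noteq> 0" for x F d b J :: real
      using that by (simp add: field_simps)
    show ?thesis
      unfolding S_eq TP_eq by (rule cancel) (use assms in auto)
  qed
  finally show ?thesis by (simp add: TP_def)
qed

lemma partial_fractions_tail:
  fixes x n :: real
  assumes "0 < x"
  shows "1 / (x * (x + 1)) = 1 / x - 1 / (x + 1)"
    and "(n - x) / (x * (x + 1)) = (n + 1) * (1 / (x * (x + 1))) - 1 / x"
    and "(n - x) / (x ^ 2 * (x + 1)) = n * (1 / x ^ 2) - (n + 1) * (1 / (x * (x + 1)))"
proof -
  \<comment> \<open>Naming x + 1 keeps field_simps from multiplying out the denominators.\<close>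
  define a where "a = x + 1"
  have "x \<noteq> 0" "a \<noteq> 0" using assms by (auto simp: a_def)
  then have "1 / (x * a) = 1 / x - 1 / a"
    and "(n - x) / (x * a) = (n + 1) * (1 / (x * a)) - 1 / x"
    and "(n - x) / (x ^ 2 * a) = n * (1 / x ^ 2) - (n + 1) * (1 / (x * a))"
    by (simp_all add: field_simps power2_eq_square) (simp_all add: a_def algebra_simps)
  then show "1 / (x * (x + 1)) = 1 / x - 1 / (x + 1)"
    and "(n - x) / (x * (x + 1)) = (n + 1) * (1 / (x * (x + 1))) - 1 / x"
    and "(n - x) / (x ^ 2 * (x + 1)) = n * (1 / x ^ 2) - (n + 1) * (1 / (x * (x + 1)))"
    unfolding a_def .
qed

lemma sum_inverse_mult_Suc: "(\<Sum>j=1..n. 1 / (real j * (real j + 1))) = real n / (real n + 1)"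
proof -
  have "(\<Sum>j=1..n. 1 / (real j * (real j + 1))) = (\<Sum>j=1..n. - 1 / real (Suc j) - (- 1 / real j))"
    by (intro sum.cong refl) (simp add: partial_fractions_tail(1))
  also have "\<dots> = 1 - 1 / (real n + 1)"
    by (subst sum_Suc_diff) simp_all
  also have "\<dots> = real n / (real n + 1)"
    by (simp add: field_simps)
  finally show ?thesis .
qed

lemma sum_tail_div_mult_Suc: "(\<Sum>j=1..n. (real n - real j) / (real j * (real j + 1))) = real n - Hgen n 1"
proof -
  have "(\<Sum>j=1..n. (real n - real j) / (real j * (real j + 1)))
      = (\<Sum>j=1..n. (real n + 1) * (1 / (real j * (real j + 1))) - 1 / real j)"
    by (intro sum.cong refl) (simp add: partial_fractions_tail)
  also have "\<dots> = real n - Hgen n 1"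
    by (simp only: sum_subtractf sum_distrib_left[symmetric] sum_inverse_mult_Suc) (simp add: Hgen_def)
  finally show ?thesis .
qed

lemma sum_tail_div_square_mult_Suc:
  "(\<Sum>j=1..n. (real n - real j) / (real j ^ 2 * (real j + 1))) = real n * Hgen n 2 - real n"
proof -
  have "(\<Sum>j=1..n. (real n - real j) / (real j ^ 2 * (real j + 1)))
      = (\<Sum>j=1..n. real n * (1 / real j ^ 2) - (real n + 1) * (1 / (real j * (real j + 1))))"
    by (intro sum.cong refl) (simp add: partial_fractions_tail)
  also have "\<dots> = real n * Hgen n 2 - real n"
    by (simp only: sum_subtractf sum_distrib_left[symmetric] sum_inverse_mult_Suc) (simp add: Hgen_def)
  finally show ?thesis .
qed

lemma sum_exponential_second_moments:
  assumes "j \<in> {1..n}"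
  shows "(\<Sum>i=1..n. (if i = j then 2 else 1) / (real i * real j)) = Hgen n 1 / real j + 1 / real j ^ 2"
proof -
  have "(\<Sum>i=1..n. (if i = j then 2 else 1) / (real i * real j))
      = (\<Sum>i=1..n. (1 / real i) / real j + (if i = j then 1 / (real i * real j) else 0))"
    by (intro sum.cong refl) auto
  also have "\<dots> = Hgen n 1 / real j + 1 / real j ^ 2"
    using assms by (simp add: sum.distrib sum_divide_distrib Hgen_def power2_eq_square)
  finally show ?thesis .
qed

lemma sum_late_split_moments:
  assumes "n \<ge> 2"
  shows "(\<Sum>j=1..n. 2 * (real n - real j) / ((real n - 1) * (real j + 1)) * (Hgen n 1 / real j + 1 / real j ^ 2))
     = 2 * real n / (real n - 1) * (Hgen n 1 + Hgen n 2 - 1 - (Hgen n 1)\<^sup>2 / real n)"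
proof -
  have summand: "2 * (real n - x) / ((real n - 1) * a) * (H / x + 1 / x ^ 2)
      = 2 / (real n - 1) * (H * ((real n - x) / (x * a)) + (real n - x) / (x ^ 2 * a))"
    if "x \<noteq> 0" "a \<noteq> 0" for x a H :: real
    using that assms by (simp add: field_simps power2_eq_square)
  have "(\<Sum>j=1..n. 2 * (real n - real j) / ((real n - 1) * (real j + 1)) * (Hgen n 1 / real j + 1 / real j ^ 2))
     = (\<Sum>j=1..n. 2 / (real n - 1) * (Hgen n 1 * ((real n - real j) / (real j * (real j + 1)))
                                       + (real n - real j) / (real j ^ 2 * (real j + 1))))"
    by (intro sum.cong refl summand) auto
  also have "\<dots> = 2 / (real n - 1) * (Hgen n 1 * (real n - Hgen n 1) + (real n * Hgen n 2 - real n))"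
    by (simp only: sum_distrib_left[symmetric] sum.distrib sum_tail_div_mult_Suc sum_tail_div_square_mult_Suc)
  also have "\<dots> = 2 * real n / (real n - 1) * (Hgen n 1 + Hgen n 2 - 1 - (Hgen n 1)\<^sup>2 / real n)"
    using assms by (simp add: field_simps power2_eq_square)
  finally show ?thesis .
qed

lemma integral_late_split_times_intervals:
  assumes "2 \<le> n" "i \<in> {1..n}" "j \<in> {1..n}"
  shows "integrable (yule_space n) (\<lambda>x. of_bool (j \<le> kappa n (fst x)) * (snd x i * snd x j))"
    and "(\<integral>x. of_bool (j \<le> kappa n (fst x)) * (snd x i * snd x j) \<partial>yule_space n)
           = 2 * (real n - real j) / ((real n - 1) * (real j + 1)) * ((if i = j then 2 else 1) / (real i * real j))"
proof -
  let ?P = "pair_pmf (yule_topology n) (pmf_of_set (tip_pairs n))"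
  let ?N = "\<Pi>\<^sub>M i\<in>{1..n}. exponential_measure (real i)"
  let ?late = "\<lambda>\<omega>. of_bool (j \<le> kappa n \<omega>) :: real"
  have "sigma_finite_measure ?N"
    by (rule prob_space_imp_sigma_finite, rule prob_space_PiM)
       (auto intro: prob_space_exponential_density)
  moreover have "integrable (measure_pmf ?P) ?late"
    by (rule measure_pmf.integrable_const_bound[where B = 1]) auto
  moreover have "integral\<^sup>L (measure_pmf ?P) ?late = 2 * (real n - real j) / ((real n - 1) * (real j + 1))"
  proof -
    have "?late = indicator {\<omega>. j \<le> kappa n \<omega>}"
      by (simp add: fun_eq_iff indicator_def)
    then show ?thesis
      using prob_late_split[OF assms(1)] assms(3) by simp
  qed
  moreover have "has_bochner_integral ?N (\<lambda>T. T i * T j) ((if i = j then 2 else 1) / (real i * real j))"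
    using assms(2,3) by (intro has_bochner_integral_exponential_product_moment) auto
  ultimately show "integrable (yule_space n) (\<lambda>x. ?late (fst x) * (snd x i * snd x j))"
    and "(\<integral>x. ?late (fst x) * (snd x i * snd x j) \<partial>yule_space n)
           = 2 * (real n - real j) / ((real n - 1) * (real j + 1)) * ((if i = j then 2 else 1) / (real i * real j))"
    using integral_fst_times_snd[of "measure_pmf ?P" ?N ?late "\<lambda>T. T i * T j"]
    by (simp_all add: yule_space_def has_bochner_integral_iff measure_pmf.sigma_finite_measure_axioms)
qed

theorem lemmaY4p3:
  fixes n :: nat
  assumes "n \<ge> 2"
  shows "(\<integral>x. tree_height n (snd x) * (tree_height n (snd x) - coal_time n x) \<partial>yule_space n)
         = 2 * real n / (real n - 1) *
           (Hgen n 1 + Hgen n 2 - 1 - (Hgen n 1)\<^sup>2 / real n)"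
proof -
  let ?p = "\<lambda>j. 2 * (real n - real j) / ((real n - 1) * (real j + 1))"
  let ?moment = "\<lambda>i j. (if i = j then 2 else 1) / (real i * real j)"
  have "(\<integral>x. tree_height n (snd x) * (tree_height n (snd x) - coal_time n x) \<partial>yule_space n)
      = (\<integral>x. (\<Sum>i=1..n. \<Sum>j=1..n. of_bool (j \<le> kappa n (fst x)) * (snd x i * snd x j)) \<partial>yule_space n)"
    unfolding tree_height_def coal_time_def sum_times_head_sum ..
  also have "\<dots> = (\<Sum>i=1..n. \<Sum>j=1..n. \<integral>x. of_bool (j \<le> kappa n (fst x)) * (snd x i * snd x j) \<partial>yule_space n)"
    by (intro integral_sum_sum integral_late_split_times_intervals(1)[OF assms])
  also have "\<dots> = (\<Sum>i=1..n. \<Sum>j=1..n. ?p j * ?moment i j)"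
    by (intro sum.cong refl integral_late_split_times_intervals(2)[OF assms])
  also have "\<dots> = (\<Sum>j=1..n. ?p j * (Hgen n 1 / real j + 1 / real j ^ 2))"
    by (subst sum.swap) (simp only: sum_distrib_left[symmetric] sum_exponential_second_moments cong: sum.cong)
  also have "\<dots> = 2 * real n / (real n - 1) * (Hgen n 1 + Hgen n 2 - 1 - (Hgen n 1)\<^sup>2 / real n)"
    by (rule sum_late_split_moments[OF assms])
  finally show ?thesis .
qed

end
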